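(* Let $n,d\ge1$, let $\eta^{(i)}_j\ge0$ ($i,j\in[n]$) be coefficients such that the matrix $A$ with $A_{ij}=1$ if $\eta^{(i)}_j>0$ and $0$ otherwise satisfies $A^n>0$ entrywise, and let $\lambda>0$ be a fixed constant depending only on $n,d$. For $\mathbf{x}_1,\ldots,\mathbf{x}_n\in\mathbb{S}^{d-1}$ define $\Phi(\mathbf{x}_1,\ldots,\mathbf{x}_n)=\min_{\mathbf{v}\in\mathbb{S}^{d-1}}\max_{i\in[n]}\angle(\mathbf{v},\mathbf{x}_i)$. There exists $c=c(n,d,\bm{\eta})>0$ such that the following holds: whenever $\mathbf{x}_1,\ldots,\mathbf{x}_n\in\mathbb{S}^{d-1}$ satisfy $\langle\mathbf{w},\mathbf{x}_i\rangle\ge\lambda$ for all $i$ for some unit vector $\mathbf{w}$, and $\mathbf{x}_1',\ldots,\mathbf{x}_n'$ are obtained from them by $n$ iterations of the update $\mathbf{x}^{(i)}\mapsto P_{\mathbb{S}^{d-1}}\big(\mathbf{x}^{(i)}+\sum_{j=1}^n\eta^{(i)}_j\mathbf{x}^{(j)}\big)$ (applied simultaneously to all $i$), then $\Phi(\mathbf{x}_1',\ldots,\mathbf{x}_n')\le(1-c)\,\Phi(\mathbf{x}_1,\ldots,\mathbf{x}_n)$.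
   Context: $\mathbb{S}^{d-1}$ is the unit sphere in $\mathbb{R}^d$, $P_{\mathbb{S}^{d-1}}(\mathbf{w})=\mathbf{w}/\|\mathbf{w}\|_2$, and $\angle(\mathbf{v},\mathbf{x})\in[0,\pi]$ is the angle between vectors. (The update is the party-model update when no agents are split by the random issue, so the subtracted sum is empty.) *)

theory Defs
  imports "HOL-Analysis.Analysis"
begin

definition vec_angle :: "'a::real_inner \<Rightarrow> 'a \<Rightarrow> real" where
  "vec_angle v x = arccos ((v \<bullet> x) / (norm v * norm x))"

definition proj_sphere :: "'a::real_normed_vector \<Rightarrow> 'a" where
  "proj_sphere w = (1 / norm w) *\<^sub>R w"

definition mat_mul :: "nat \<Rightarrow> (nat \<Rightarrow> nat \<Rightarrow> real) \<Rightarrow> (nat \<Rightarrow> nat \<Rightarrow> real) \<Rightarrow> (nat \<Rightarrow> nat \<Rightarrow> real)" where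
  "mat_mul n A B = (\<lambda>i j. \<Sum>k<n. A i k * B k j)"

fun mat_pow :: "nat \<Rightarrow> (nat \<Rightarrow> nat \<Rightarrow> real) \<Rightarrow> nat \<Rightarrow> (nat \<Rightarrow> nat \<Rightarrow> real)" where
  "mat_pow n A 0 = (\<lambda>i j. if i = j then 1 else 0)"
| "mat_pow n A (Suc k) = mat_mul n (mat_pow n A k) A"

definition supp_mat :: "(nat \<Rightarrow> nat \<Rightarrow> real) \<Rightarrow> (nat \<Rightarrow> nat \<Rightarrow> real)" where
  "supp_mat eta = (\<lambda>i j. if eta i j > 0 then 1 else 0)"

definition party_step :: "nat \<Rightarrow> (nat \<Rightarrow> nat \<Rightarrow> real) \<Rightarrow> (nat \<Rightarrow> 'a::real_normed_vector) \<Rightarrow> (nat \<Rightarrow> 'a)" where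
  "party_step n eta x = (\<lambda>i. proj_sphere (x i + (\<Sum>j<n. eta i j *\<^sub>R x j)))"

definition Phi :: "nat \<Rightarrow> (nat \<Rightarrow> 'a::real_inner) \<Rightarrow> real" where
  "Phi n x = Inf {Max ((\<lambda>i. vec_angle v (x i)) ` {..<n}) | v. norm v = 1}"

end

theory Submission
  imports Defs
begin

text \<open>
  Let v be a unit vector at which the largest angle to the agents attains Phi = r. By
  minimality no unit vector u orthogonal to v has positive inner product with every agent,
  since otherwise tilting v towards u would shrink all angles. Because A^n > 0 and the agents
  never leave the cap of unit vectors y with <w, y> >= lam, after n steps every agent is a
  unit vector p = sum_j W_j x_j whose weights are all at least a fixed fraction delta of their
  sum. The component of p along v is at least cos r times that sum, while the component q
  orthogonal to v satisfies |q|^2 = sum_j W_j <q, x_j>, where one term is nonpositive and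
  each other term is at most W_j |q| sin r. Hence the new angle has tangent at most
  (1 - delta) tan r, and since r <= arccos lam < pi/2 the mean value theorem for tan turns
  this into an angle of at most (1 - c) r.
\<close>

lemma ex_pos_lower_bound:
  fixes f :: "'i \<Rightarrow> real"
  assumes "finite I"
  shows "\<exists>e>0. \<forall>i\<in>I. 0 < f i \<longrightarrow> e \<le> f i"
proof (intro exI conjI ballI impI)
  let ?M = "insert 1 (f ` {i\<in>I. 0 < f i})"
  show "0 < Min ?M" using assms by (subst Min_gr_iff) auto
  show "Min ?M \<le> f i" if "i \<in> I" "0 < f i" for i using assms that by (intro Min_le) auto
qed

lemma continuous_on_Max:
  fixes f :: "'i \<Rightarrow> 'b::topological_space \<Rightarrow> 'c::linorder_topology"
  assumes "finite I" "I \<noteq> {}" "\<And>i. i \<in> I \<Longrightarrow> continuous_on S (f i)"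
  shows "continuous_on S (\<lambda>v. Max ((\<lambda>i. f i v) ` I))"
  using assms
proof (induction I rule: finite_ne_induct)
  case (insert i I)
  then have "continuous_on S (\<lambda>v. max (f i v) (Max ((\<lambda>i. f i v) ` I)))"
    by (intro continuous_on_max) auto
  then show ?case using insert by (simp add: Max_insert)
qed simp

lemma abs_inner_unit_le_1:
  fixes v x :: "'a::real_inner"
  assumes "norm v = 1" "norm x = 1"
  shows "\<bar>v \<bullet> x\<bar> \<le> 1"
  using Cauchy_Schwarz_ineq2[of v x] assms by simp

lemma norm_sq_orth_decomp:
  fixes v p :: "'a::real_inner"
  assumes "norm v = 1"
  shows "(norm p)\<^sup>2 = (norm (p - (v \<bullet> p) *\<^sub>R v))\<^sup>2 + (v \<bullet> p)\<^sup>2"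
proof -
  have "v \<bullet> v = 1" using assms by (simp add: dot_square_norm)
  then show ?thesis
    unfolding power2_norm_eq_inner
    by (simp add: inner_diff_left inner_diff_right inner_commute[of p v] power2_eq_square)
qed

lemma tan_diff_le:
  fixes t r :: real
  assumes "0 \<le> t" "t \<le> r" "r < pi/2"
  shows "tan r - tan t \<le> (r - t) / (cos r)\<^sup>2"
proof (cases "t = r")
  case False
  then have "t < r" using assms(2) by simp
  have cos_ge: "cos r \<le> cos z" "0 < cos r" if "t \<le> z" "z \<le> r" for z
    using that assms by (auto intro: cos_monotone_0_pi_le cos_gt_zero_pi)
  obtain z where z: "t < z" "z < r" "tan r - tan t = (r - t) * inverse ((cos z)\<^sup>2)"
    using MVT2[OF \<open>t < r\<close>, of tan "\<lambda>z. inverse ((cos z)\<^sup>2)"] cos_ge by fastforce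
  have "(cos r)\<^sup>2 \<le> (cos z)\<^sup>2" using cos_ge[of z] z by (intro power_mono) auto
  then have "inverse ((cos z)\<^sup>2) \<le> inverse ((cos r)\<^sup>2)"
    using cos_ge[of r] assms(2) by (intro le_imp_inverse_le) auto
  then show ?thesis using z \<open>t < r\<close> by (simp add: divide_inverse mult_left_mono)
qed simp

section \<open>Angular radius of a configuration\<close>

lemma vec_angle_bounds: "0 \<le> vec_angle v x \<and> vec_angle v x \<le> pi"
proof -
  have "\<bar>(v \<bullet> x) / (norm v * norm x)\<bar> \<le> 1"
  proof (cases "norm v * norm x = 0")
    case False
    then show ?thesis using Cauchy_Schwarz_ineq2[of v x] by simp
  qed auto
  then show ?thesis
    unfolding vec_angle_def abs_le_iff by (intro conjI arccos_lbound arccos_ubound) auto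
qed

lemma vec_angle_unit: "norm v = 1 \<Longrightarrow> norm x = 1 \<Longrightarrow> vec_angle v x = arccos (v \<bullet> x)"
  unfolding vec_angle_def by simp

lemma vec_angle_unit_le_iff:
  assumes "norm v = 1" "norm x = 1" "0 \<le> t" "t \<le> pi"
  shows "vec_angle v x \<le> t \<longleftrightarrow> cos t \<le> v \<bullet> x"
proof -
  have vx: "\<bar>v \<bullet> x\<bar> \<le> 1" using abs_inner_unit_le_1[OF assms(1,2)] .
  then have "cos t \<le> cos (arccos (v \<bullet> x)) \<longleftrightarrow> arccos (v \<bullet> x) \<le> t"
    using assms(3,4) by (intro cos_mono_le_eq) (auto intro: arccos_lbound arccos_ubound)
  then show ?thesis using vx assms(1,2) by (simp add: vec_angle_unit cos_arccos_abs)
qed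

lemma vec_angle_unit_less_iff:
  assumes "norm v = 1" "norm x = 1" "0 \<le> t" "t \<le> pi"
  shows "vec_angle v x < t \<longleftrightarrow> cos t < v \<bullet> x"
proof -
  have vx: "\<bar>v \<bullet> x\<bar> \<le> 1" using abs_inner_unit_le_1[OF assms(1,2)] .
  then have "cos t < cos (arccos (v \<bullet> x)) \<longleftrightarrow> arccos (v \<bullet> x) < t"
    using assms(3,4) by (intro cos_mono_less_eq) (auto intro: arccos_lbound arccos_ubound)
  then show ?thesis using vx assms(1,2) by (simp add: vec_angle_unit cos_arccos_abs)
qed

lemma continuous_on_vec_angle_sphere: "continuous_on (sphere 0 1) (\<lambda>v. vec_angle v x)"
proof -
  \<comment> \<open>For x = 0 both sides below are arccos 0, since division by zero yields 0.\<close>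
  have "continuous_on (sphere 0 1) (\<lambda>v. arccos (v \<bullet> (x /\<^sub>R norm x)))"
  proof (intro continuous_on_compose2[OF continuous_on_arccos'] continuous_intros)
    have "\<bar>v \<bullet> (x /\<^sub>R norm x)\<bar> \<le> 1" if "norm v = 1" for v
      using Cauchy_Schwarz_ineq2[of v "x /\<^sub>R norm x"] that by (cases "x = 0") auto
    then show "(\<lambda>v. v \<bullet> (x /\<^sub>R norm x)) ` sphere 0 1 \<subseteq> {-1..1}"
      by (auto simp: abs_le_iff)
  qed
  moreover have "vec_angle v x = arccos (v \<bullet> (x /\<^sub>R norm x))" if "v \<in> sphere 0 1" for v
    using that by (simp add: vec_angle_def divide_inverse_commute)
  ultimately show ?thesis
    by (metis (no_types, lifting) continuous_on_cong)
qed

definition max_angle :: "nat \<Rightarrow> (nat \<Rightarrow> 'a::real_inner) \<Rightarrow> 'a \<Rightarrow> real" where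
  "max_angle n x v = Max ((\<lambda>i. vec_angle v (x i)) ` {..<n})"

lemma Phi_eq_Inf_max_angle: "Phi n x = Inf (max_angle n x ` sphere 0 1)"
  unfolding Phi_def max_angle_def by (rule arg_cong[where f = Inf]) auto

lemma max_angle_le_iff: "0 < n \<Longrightarrow> max_angle n x v \<le> t \<longleftrightarrow> (\<forall>i<n. vec_angle v (x i) \<le> t)"
  unfolding max_angle_def by (subst Max_le_iff) auto

lemma max_angle_less_iff: "0 < n \<Longrightarrow> max_angle n x v < t \<longleftrightarrow> (\<forall>i<n. vec_angle v (x i) < t)"
  unfolding max_angle_def by (subst Max_less_iff) auto

lemma max_angle_bounds:
  assumes "0 < n"
  shows "0 \<le> max_angle n x v \<and> max_angle n x v \<le> pi"
proof
  have "vec_angle v (x 0) \<le> max_angle n x v"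
    unfolding max_angle_def using assms by (intro Max_ge) auto
  then show "0 \<le> max_angle n x v" using vec_angle_bounds[of v "x 0"] by linarith
  show "max_angle n x v \<le> pi"
    using assms vec_angle_bounds by (auto simp: max_angle_le_iff)
qed

lemma Phi_le_max_angle:
  assumes "0 < n" "norm v = 1"
  shows "Phi n x \<le> max_angle n x v"
  unfolding Phi_eq_Inf_max_angle
proof (rule cInf_lower)
  show "max_angle n x v \<in> max_angle n x ` sphere 0 1" using assms(2) by simp
  show "bdd_below (max_angle n x ` sphere 0 1)"
    using max_angle_bounds[OF assms(1)] by (intro bdd_belowI[of _ 0]) auto
qed

lemma Phi_attained:
  fixes x :: "nat \<Rightarrow> 'a::euclidean_space"
  assumes "0 < n"
  obtains v where "norm v = 1" "Phi n x = max_angle n x v"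
proof -
  have "continuous_on (sphere 0 1) (max_angle n x)"
    unfolding max_angle_def using assms
    by (intro continuous_on_Max continuous_on_vec_angle_sphere) auto
  moreover have "sphere (0::'a) 1 \<noteq> {}" by simp
  ultimately obtain v where v: "v \<in> sphere 0 1" "\<forall>u\<in>sphere 0 1. max_angle n x v \<le> max_angle n x u"
    using continuous_attains_inf[OF compact_sphere] by blast
  then have "Phi n x = max_angle n x v"
    unfolding Phi_eq_Inf_max_angle by (intro cInf_eq_minimum) auto
  with v(1) show ?thesis using that by simp
qed

section \<open>Positive combinations seen from an optimal centre\<close>

text \<open>The witness is v + alpha u normalised: every inner product with an x j gains at
  least alpha^2, while the normalisation divides by at most 1 + alpha^2/2.\<close>

lemma exists_tilted_center:
  fixes v u :: "'a::real_inner" and x :: "nat \<Rightarrow> 'a"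
  assumes v: "norm v = 1" and u: "norm u = 1" "u \<bullet> v = 0" and "m \<le> 1"
    and vx: "\<forall>j<n. m \<le> v \<bullet> x j" and ux: "\<forall>j<n. 0 < u \<bullet> x j"
  shows "\<exists>v'. norm v' = 1 \<and> (\<forall>j<n. m < v' \<bullet> x j)"
proof -
  define \<alpha> where "\<alpha> = Min (insert 1 ((\<lambda>j. u \<bullet> x j) ` {..<n}))"
  have \<alpha>0: "0 < \<alpha>" unfolding \<alpha>_def using ux by (subst Min_gr_iff) auto
  have \<alpha>x: "\<alpha> \<le> u \<bullet> x j" if "j < n" for j unfolding \<alpha>_def using that by (intro Min_le) auto
  define s where "s = sqrt (1 + \<alpha>\<^sup>2)"
  have "v \<bullet> v = 1" "u \<bullet> u = 1" using v u by (simp_all add: dot_square_norm)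
  then have "(norm (v + \<alpha> *\<^sub>R u))\<^sup>2 = 1 + \<alpha>\<^sup>2"
    using u unfolding power2_norm_eq_inner
    by (simp add: inner_add_left inner_add_right inner_commute[of v u] power2_eq_square)
  then have norm_vu: "norm (v + \<alpha> *\<^sub>R u) = s" unfolding s_def by (metis norm_ge_zero real_sqrt_unique)
  have s1: "1 \<le> s" unfolding s_def by simp
  have "s \<le> 1 + \<alpha>\<^sup>2 / 2"
    unfolding s_def by (rule real_le_lsqrt) (auto simp: power2_eq_square algebra_simps \<alpha>0 less_imp_le)
  have ms: "m * s < m + \<alpha>\<^sup>2"
  proof (cases "0 \<le> m")
    case True
    have "m * \<alpha>\<^sup>2 \<le> \<alpha>\<^sup>2" using mult_right_mono[OF \<open>m \<le> 1\<close>, of "\<alpha>\<^sup>2"] by simp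
    moreover have "m * s \<le> m * (1 + \<alpha>\<^sup>2 / 2)" using True \<open>s \<le> 1 + \<alpha>\<^sup>2 / 2\<close> by (rule mult_left_mono[rotated])
    moreover have "m * (1 + \<alpha>\<^sup>2 / 2) = m + m * \<alpha>\<^sup>2 / 2" by (simp add: algebra_simps)
    moreover have "0 < \<alpha>\<^sup>2" using \<alpha>0 by simp
    ultimately show ?thesis by linarith
  next
    case False
    then have "m * s \<le> m" using s1 by (simp add: mult_le_cancel_left1)
    moreover have "0 < \<alpha>\<^sup>2" using \<alpha>0 by simp
    ultimately show ?thesis by linarith
  qed
  show ?thesis
  proof (intro exI conjI allI impI)
    show "norm ((1 / s) *\<^sub>R (v + \<alpha> *\<^sub>R u)) = 1" using norm_vu s1 by simp
    fix j assume "j < n"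
    have "m + \<alpha>\<^sup>2 \<le> v \<bullet> x j + \<alpha> * (u \<bullet> x j)"
      using vx \<alpha>x[OF \<open>j < n\<close>] \<alpha>0 \<open>j < n\<close> by (auto simp: power2_eq_square intro!: add_mono)
    with ms s1 show "m < (1 / s) *\<^sub>R (v + \<alpha> *\<^sub>R u) \<bullet> x j"
      by (simp add: inner_add_left field_simps)
  qed
qed

lemma minimizer_separates:
  fixes x :: "nat \<Rightarrow> 'a::real_inner"
  assumes "0 < n" and v: "norm v = 1" and x: "\<forall>j<n. norm (x j) = 1"
    and minimal: "\<forall>v'. norm v' = 1 \<longrightarrow> max_angle n x v \<le> max_angle n x v'"
    and u: "norm u = 1" "u \<bullet> v = 0"
  shows "\<exists>j<n. u \<bullet> x j \<le> 0"
proof (rule ccontr)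
  assume "\<not> (\<exists>j<n. u \<bullet> x j \<le> 0)"
  then have ux: "\<forall>j<n. 0 < u \<bullet> x j" by auto
  define r where "r = max_angle n x v"
  have r: "0 \<le> r" "r \<le> pi" using max_angle_bounds[OF \<open>0 < n\<close>] unfolding r_def by auto
  have "\<forall>j<n. cos r \<le> v \<bullet> x j"
  proof (intro allI impI)
    fix j assume "j < n"
    have "vec_angle v (x j) \<le> r" using max_angle_le_iff[OF \<open>0 < n\<close>] \<open>j < n\<close> unfolding r_def by blast
    then show "cos r \<le> v \<bullet> x j" using vec_angle_unit_le_iff[OF v _ r] x \<open>j < n\<close> by blast
  qed
  then obtain v' where v': "norm v' = 1" "\<forall>j<n. cos r < v' \<bullet> x j"
    using exists_tilted_center[OF v u cos_le_one _ ux] by blast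
  have "vec_angle v' (x j) < r" if "j < n" for j
    using vec_angle_unit_less_iff[OF v'(1) _ r] v'(2) x that by blast
  then have "max_angle n x v' < r" using max_angle_less_iff[OF \<open>0 < n\<close>] by blast
  then show False using minimal v'(1) unfolding r_def by (meson not_le)
qed

lemma inner_orth_le_sin:
  fixes v x q :: "'a::real_inner"
  assumes "norm v = 1" "norm x = 1" "q \<bullet> v = 0"
    and "0 \<le> cos r" "cos r \<le> v \<bullet> x" "0 \<le> sin r"
  shows "q \<bullet> x \<le> norm q * sin r"
proof -
  have "q \<bullet> x = q \<bullet> (x - (v \<bullet> x) *\<^sub>R v)"
    using assms(3) by (simp add: inner_diff_right)
  also have "\<dots> \<le> norm q * norm (x - (v \<bullet> x) *\<^sub>R v)"
    by (rule Cauchy_Schwarz_ineq2[THEN abs_le_D1])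
  also have "norm (x - (v \<bullet> x) *\<^sub>R v) \<le> sin r"
  proof (rule power2_le_imp_le)
    have "(cos r)\<^sup>2 \<le> (v \<bullet> x)\<^sup>2" using power_mono[OF assms(5,4)] .
    then show "(norm (x - (v \<bullet> x) *\<^sub>R v))\<^sup>2 \<le> (sin r)\<^sup>2"
      using norm_sq_orth_decomp[OF assms(1), of x] assms(2) sin_squared_eq[of r] by simp
  qed (rule assms(6))
  finally show ?thesis by (simp add: mult_left_mono)
qed

lemma orth_part_norm_le:
  fixes v :: "'a::real_inner" and x :: "nat \<Rightarrow> 'a" and W :: "nat \<Rightarrow> real"
  assumes "0 < n" and v: "norm v = 1" and x: "\<forall>j<n. norm (x j) = 1 \<and> cos r \<le> v \<bullet> x j"
    and r: "0 \<le> cos r" "0 \<le> sin r"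
    and separated: "\<forall>u. norm u = 1 \<longrightarrow> u \<bullet> v = 0 \<longrightarrow> (\<exists>j<n. u \<bullet> x j \<le> 0)"
    and W: "\<forall>j<n. 0 \<le> W j \<and> \<delta> * (\<Sum>j<n. W j) \<le> W j"
  defines "p \<equiv> \<Sum>j<n. W j *\<^sub>R x j"
  shows "norm (p - (v \<bullet> p) *\<^sub>R v) \<le> (1 - \<delta>) * (\<Sum>j<n. W j) * sin r"
proof -
  define S where "S = (\<Sum>j<n. W j)"
  define q where "q = p - (v \<bullet> p) *\<^sub>R v"
  have qv: "q \<bullet> v = 0"
  proof -
    have "v \<bullet> v = 1" using v by (simp add: dot_square_norm)
    then show ?thesis unfolding q_def by (simp add: inner_diff_left inner_diff_right inner_commute)
  qed
  have W0_le_S: "W 0 \<le> S" unfolding S_def using W \<open>0 < n\<close> by (intro member_le_sum) auto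
  show ?thesis
  proof (cases "q = 0")
    case True
    have "\<delta> * S \<le> S" using W W0_le_S \<open>0 < n\<close> by (auto simp: S_def)
    then have "0 \<le> (1 - \<delta>) * S" by (simp add: algebra_simps)
    then show ?thesis using True r(2) unfolding q_def S_def by simp
  next
    case False
    then obtain j0 where j0: "j0 < n" "(q /\<^sub>R norm q) \<bullet> x j0 \<le> 0"
      using separated[rule_format, of "q /\<^sub>R norm q"] qv by auto
    then have qxj0: "q \<bullet> x j0 \<le> 0" using False by (simp add: mult_le_0_iff)
    have "(norm q)\<^sup>2 = q \<bullet> p"
      using qv unfolding q_def power2_norm_eq_inner by (simp add: inner_diff_left inner_diff_right inner_commute)
    also have "\<dots> = (\<Sum>j<n. W j * (q \<bullet> x j))" unfolding p_def by (simp add: inner_sum_right)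
    also have "\<dots> = W j0 * (q \<bullet> x j0) + (\<Sum>j\<in>{..<n}-{j0}. W j * (q \<bullet> x j))"
      using j0 by (subst sum.remove[of _ j0]) auto
    also have "\<dots> \<le> (\<Sum>j\<in>{..<n}-{j0}. W j * (norm q * sin r))"
      using W j0 qxj0 inner_orth_le_sin[OF v _ qv r(1) _ r(2)] x
      by (intro add_decreasing sum_mono mult_left_mono) (auto simp: mult_nonneg_nonpos)
    also have "\<dots> = (S - W j0) * (norm q * sin r)"
      unfolding S_def using j0 by (simp add: sum_distrib_right[symmetric] sum_diff1)
    also have "\<dots> \<le> (1 - \<delta>) * S * (norm q * sin r)"
      using W j0 r(2) unfolding S_def by (intro mult_right_mono) (auto simp: algebra_simps)
    finally have "norm q * norm q \<le> ((1 - \<delta>) * S * sin r) * norm q"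
      by (simp add: power2_eq_square algebra_simps)
    then show ?thesis using False unfolding q_def S_def by simp
  qed
qed

lemma mixture_orth_part_le:
  fixes v :: "'a::real_inner" and x :: "nat \<Rightarrow> 'a" and W :: "nat \<Rightarrow> real"
  assumes "0 < n" and v: "norm v = 1" and x: "\<forall>j<n. norm (x j) = 1 \<and> cos r \<le> v \<bullet> x j"
    and r: "0 \<le> r" "r < pi/2"
    and separated: "\<forall>u. norm u = 1 \<longrightarrow> u \<bullet> v = 0 \<longrightarrow> (\<exists>j<n. u \<bullet> x j \<le> 0)"
    and W: "\<forall>j<n. 0 \<le> W j \<and> \<delta> * (\<Sum>j<n. W j) \<le> W j" and S_pos: "0 < (\<Sum>j<n. W j)"
  defines "p \<equiv> \<Sum>j<n. W j *\<^sub>R x j"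
  shows "0 < v \<bullet> p \<and> norm (p - (v \<bullet> p) *\<^sub>R v) \<le> (1 - \<delta>) * tan r * (v \<bullet> p)"
proof
  define S where "S = (\<Sum>j<n. W j)"
  have cos_pos: "0 < cos r" using r by (intro cos_gt_zero_pi) auto
  have sin_nonneg: "0 \<le> sin r" using r by (intro sin_ge_zero) auto
  have "cos r * S = (\<Sum>j<n. W j * cos r)" unfolding S_def by (simp add: sum_distrib_left mult.commute)
  also have "\<dots> \<le> (\<Sum>j<n. W j * (v \<bullet> x j))" using W x by (intro sum_mono mult_left_mono) auto
  also have "\<dots> = v \<bullet> p" unfolding p_def by (simp add: inner_sum_right)
  finally have a_ge: "cos r * S \<le> v \<bullet> p" .
  then have S_le: "S \<le> (v \<bullet> p) / cos r" using cos_pos by (simp add: field_simps)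
  have "0 < cos r * S" using cos_pos S_pos unfolding S_def by simp
  then show "0 < v \<bullet> p" using a_ge by linarith
  have "W 0 \<le> S" unfolding S_def using W \<open>0 < n\<close> by (intro member_le_sum) auto
  then have "\<delta> * S \<le> S" using W \<open>0 < n\<close> unfolding S_def by fastforce
  then have "0 \<le> (1 - \<delta>) * sin r" using S_pos sin_nonneg unfolding S_def by simp
  have "norm (p - (v \<bullet> p) *\<^sub>R v) \<le> (1 - \<delta>) * S * sin r"
    unfolding p_def S_def using orth_part_norm_le[OF \<open>0 < n\<close> v x _ sin_nonneg separated W] cos_pos by simp
  also have "\<dots> = ((1 - \<delta>) * sin r) * S" by simp
  also have "\<dots> \<le> ((1 - \<delta>) * sin r) * ((v \<bullet> p) / cos r)"
    using S_le \<open>0 \<le> (1 - \<delta>) * sin r\<close> by (rule mult_left_mono)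
  also have "\<dots> = (1 - \<delta>) * tan r * (v \<bullet> p)" by (simp add: tan_def)
  finally show "norm (p - (v \<bullet> p) *\<^sub>R v) \<le> (1 - \<delta>) * tan r * (v \<bullet> p)" .
qed

lemma vec_angle_le_of_orth_part:
  fixes v p :: "'a::real_inner"
  assumes v: "norm v = 1" and a_pos: "0 < v \<bullet> p"
    and orth: "norm (p - (v \<bullet> p) *\<^sub>R v) \<le> tan t * (v \<bullet> p)" and t: "0 \<le> t" "t < pi/2"
  shows "vec_angle v p \<le> t"
proof -
  define a where "a = v \<bullet> p"
  have cos_pos: "0 < cos t" using t by (intro cos_gt_zero_pi) auto
  have "(norm (p - a *\<^sub>R v))\<^sup>2 \<le> (tan t * a)\<^sup>2"
    using orth unfolding a_def by (rule power_mono) simp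
  then have "(norm p)\<^sup>2 \<le> a\<^sup>2 * (1 + (tan t)\<^sup>2)"
    using norm_sq_orth_decomp[OF v, of p] unfolding a_def by (simp add: algebra_simps power_mult_distrib)
  also have "\<dots> = (a / cos t)\<^sup>2"
    using tan_sec[of t] cos_pos by (simp add: power_divide divide_inverse power_inverse power_mult_distrib)
  finally have "norm p \<le> a / cos t"
    by (rule power2_le_imp_le) (use a_pos cos_pos in \<open>simp add: a_def\<close>)
  then have "norm p * cos t \<le> a" using cos_pos by (simp add: pos_le_divide_eq)
  have "a \<le> norm p" using Cauchy_Schwarz_ineq2[of v p] v unfolding a_def by simp
  then have "0 < norm p" using a_pos unfolding a_def by linarith
  then have "cos t \<le> a / norm p" "a / norm p \<le> 1"
    using \<open>norm p * cos t \<le> a\<close> \<open>a \<le> norm p\<close> by (simp_all add: pos_le_divide_eq mult.commute)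
  then have "arccos (a / norm p) \<le> arccos (cos t)"
    using cos_pos by (intro arccos_le_arccos) auto
  then show ?thesis using t v unfolding vec_angle_def a_def by (simp add: arccos_cos)
qed

lemma tan_shrink:
  fixes r lam c \<delta> :: real
  assumes r: "0 \<le> r" "r < pi/2" and lam: "0 < lam" "lam \<le> cos r"
    and c: "0 \<le> c" "c \<le> 1" "c \<le> \<delta> * lam\<^sup>2"
  shows "(1 - \<delta>) * tan r \<le> tan ((1 - c) * r)"
proof -
  have "tan r - tan ((1 - c) * r) \<le> (r - (1 - c) * r) / (cos r)\<^sup>2"
    using r c by (intro tan_diff_le) (auto simp: algebra_simps intro: mult_left_le_one_le)
  also have "\<dots> = c * r / (cos r)\<^sup>2" by (simp add: algebra_simps)
  also have "\<dots> \<le> c * tan r / lam\<^sup>2"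
  proof (rule frac_le)
    show "c * r \<le> c * tan r"
      using abs_tan_ge[of r] r c tan_pos_pi2_le[of r] by (intro mult_left_mono) auto
    show "lam\<^sup>2 \<le> (cos r)\<^sup>2" using lam by (intro power_mono) auto
  qed (use r c lam tan_pos_pi2_le[of r] in auto)
  also have "\<dots> \<le> \<delta> * lam\<^sup>2 * tan r / lam\<^sup>2"
    using c tan_pos_pi2_le[OF r] by (intro divide_right_mono mult_right_mono) auto
  also have "\<dots> = \<delta> * tan r" using lam by simp
  finally show ?thesis by (simp add: algebra_simps)
qed

lemma vec_angle_mixture_le:
  fixes v :: "'a::real_inner" and x :: "nat \<Rightarrow> 'a" and W :: "nat \<Rightarrow> real"
  assumes "0 < n" and v: "norm v = 1" and x: "\<forall>j<n. norm (x j) = 1 \<and> cos r \<le> v \<bullet> x j"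
    and r: "0 \<le> r" "r < pi/2"
    and separated: "\<forall>u. norm u = 1 \<longrightarrow> u \<bullet> v = 0 \<longrightarrow> (\<exists>j<n. u \<bullet> x j \<le> 0)"
    and W: "\<forall>j<n. 0 \<le> W j \<and> \<delta> * (\<Sum>j<n. W j) \<le> W j" "0 < (\<Sum>j<n. W j)"
    and lam: "0 < lam" "lam \<le> cos r" and c: "0 \<le> c" "c \<le> 1" "c \<le> \<delta> * lam\<^sup>2"
  shows "vec_angle v (\<Sum>j<n. W j *\<^sub>R x j) \<le> (1 - c) * r"
proof (rule vec_angle_le_of_orth_part[OF v])
  define p where "p = (\<Sum>j<n. W j *\<^sub>R x j)"
  have p: "0 < v \<bullet> p" "norm (p - (v \<bullet> p) *\<^sub>R v) \<le> (1 - \<delta>) * tan r * (v \<bullet> p)"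
    using mixture_orth_part_le[OF \<open>0 < n\<close> v x r separated W] unfolding p_def by auto
  show "0 < v \<bullet> (\<Sum>j<n. W j *\<^sub>R x j)" using p(1) unfolding p_def .
  have "(1 - \<delta>) * tan r * (v \<bullet> p) \<le> tan ((1 - c) * r) * (v \<bullet> p)"
    using tan_shrink[OF r lam c] p(1) by (intro mult_right_mono) auto
  with p(2) show "norm (p - (v \<bullet> p) *\<^sub>R v) \<le> tan ((1 - c) * r) * (v \<bullet> p)"
    unfolding p_def by linarith
  have "(1 - c) * r \<le> r" using r c by (intro mult_left_le_one_le) auto
  then show "0 \<le> (1 - c) * r" "(1 - c) * r < pi/2" using r c by auto
qed

section \<open>The party dynamics\<close>

lemma sum_scaleR_mat_mul:
  fixes x :: "nat \<Rightarrow> 'a::real_vector"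
  shows "(\<Sum>l<n. W i l *\<^sub>R (\<Sum>j<n. V l j *\<^sub>R x j)) = (\<Sum>j<n. mat_mul n W V i j *\<^sub>R x j)"
proof -
  have "(\<Sum>l<n. W i l *\<^sub>R (\<Sum>j<n. V l j *\<^sub>R x j)) = (\<Sum>l<n. \<Sum>j<n. (W i l * V l j) *\<^sub>R x j)"
    by (simp add: scaleR_sum_right)
  also have "\<dots> = (\<Sum>j<n. \<Sum>l<n. (W i l * V l j) *\<^sub>R x j)" by (rule sum.swap)
  finally show ?thesis unfolding mat_mul_def by (simp add: scaleR_sum_left)
qed

lemma mat_mul_mono:
  assumes "\<forall>l<n. 0 \<le> A i l \<and> A i l \<le> A' i l" "\<forall>l<n. 0 \<le> B l j \<and> B l j \<le> B' l j"
  shows "mat_mul n A B i j \<le> mat_mul n A' B' i j"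
  unfolding mat_mul_def using assms by (intro sum_mono mult_mono) auto

lemma mat_pow_nonneg:
  assumes "\<forall>i<n. \<forall>j<n. 0 \<le> A i j"
  shows "j < n \<Longrightarrow> 0 \<le> mat_pow n A k i j"
proof (induction k arbitrary: i j)
  case (Suc k)
  then show ?case using assms by (auto simp: mat_mul_def intro!: sum_nonneg)
qed simp

lemma mat_pow_scale: "mat_pow n (\<lambda>i j. \<gamma> * A i j) k i j = \<gamma> ^ k * mat_pow n A k i j"
  by (induction k arbitrary: i j) (auto simp: mat_mul_def sum_distrib_left algebra_simps)

definition in_cap :: "nat \<Rightarrow> 'a::real_inner \<Rightarrow> real \<Rightarrow> (nat \<Rightarrow> 'a) \<Rightarrow> bool" where
  "in_cap n w lam x \<longleftrightarrow> (\<forall>i<n. norm (x i) = 1 \<and> lam \<le> w \<bullet> x i)"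

lemma sum_delta_scaleR:
  fixes x :: "nat \<Rightarrow> 'a::real_vector"
  assumes "i < n"
  shows "(\<Sum>j<n. (if i = j then 1 else 0) *\<^sub>R x j) = x i"
proof -
  have "(\<Sum>j<n. (if i = j then 1 else 0) *\<^sub>R x j) = (\<Sum>j<n. if i = j then x j else 0)"
    by (rule sum.cong) auto
  then show ?thesis using assms by simp
qed

lemma party_sum_bounds:
  fixes x :: "nat \<Rightarrow> 'a::real_inner"
  assumes eta: "\<forall>j<n. 0 \<le> eta i j" and w: "norm w = 1" and "0 < lam" "in_cap n w lam x" "i < n"
  defines "y \<equiv> x i + (\<Sum>j<n. eta i j *\<^sub>R x j)"
  shows "0 < norm y" "lam * norm y \<le> w \<bullet> y" "norm y \<le> 1 + (\<Sum>j<n. eta i j)"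
proof -
  define R where "R = (\<Sum>j<n. eta i j)"
  have x: "norm (x j) = 1" "lam \<le> w \<bullet> x j" if "j < n" for j
    using assms(4) that unfolding in_cap_def by auto
  have "lam * (1 + R) = lam + (\<Sum>j<n. eta i j * lam)"
    unfolding R_def by (simp add: algebra_simps sum_distrib_left)
  also have "\<dots> \<le> w \<bullet> x i + (\<Sum>j<n. eta i j * (w \<bullet> x j))"
    using eta x \<open>i < n\<close> by (intro add_mono sum_mono mult_left_mono) auto
  also have "\<dots> = w \<bullet> y" unfolding y_def by (simp add: inner_add_right inner_sum_right)
  finally have lower: "lam * (1 + R) \<le> w \<bullet> y" .
  have "norm y \<le> norm (x i) + (\<Sum>j<n. norm (eta i j *\<^sub>R x j))"
    unfolding y_def by (rule norm_triangle_le[OF add_left_mono[OF norm_sum]])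
  also have "\<dots> = 1 + R"
    unfolding R_def using eta x \<open>i < n\<close> by (intro arg_cong2[where f = "(+)"] sum.cong) auto
  finally show upper: "norm y \<le> 1 + (\<Sum>j<n. eta i j)" unfolding R_def .
  have "w \<bullet> y \<le> norm y" using Cauchy_Schwarz_ineq2[of w y] w by simp
  have "0 \<le> R" unfolding R_def using eta by (auto intro: sum_nonneg)
  then have "0 < lam * (1 + R)" "lam * norm y \<le> lam * (1 + R)"
    using \<open>0 < lam\<close> upper unfolding R_def by simp_all
  then show "0 < norm y" "lam * norm y \<le> w \<bullet> y"
    using lower \<open>w \<bullet> y \<le> norm y\<close> by linarith+
qed

lemma party_step_in_cap:
  fixes x :: "nat \<Rightarrow> 'a::real_inner"
  assumes eta: "\<forall>i<n. \<forall>j<n. 0 \<le> eta i j" and w: "norm w = 1" and "0 < lam" "in_cap n w lam x"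
  shows "in_cap n w lam (party_step n eta x)"
  unfolding in_cap_def
proof (intro allI impI conjI)
  fix i assume "i < n"
  define y where "y = x i + (\<Sum>j<n. eta i j *\<^sub>R x j)"
  have "0 < norm y" "lam * norm y \<le> w \<bullet> y"
    using party_sum_bounds[OF _ w \<open>0 < lam\<close> \<open>in_cap n w lam x\<close> \<open>i < n\<close>] eta \<open>i < n\<close>
    unfolding y_def by auto
  then show "norm (party_step n eta x i) = 1" "lam \<le> w \<bullet> party_step n eta x i"
    unfolding party_step_def proj_sphere_def y_def[symmetric] by (simp_all add: field_simps)
qed

lemma funpow_party_step_in_cap:
  fixes x :: "nat \<Rightarrow> 'a::real_inner"
  assumes "\<forall>i<n. \<forall>j<n. 0 \<le> eta i j" "norm w = 1" "0 < lam" "in_cap n w lam x"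
  shows "in_cap n w lam ((party_step n eta ^^ k) x)"
  by (induction k) (use assms party_step_in_cap in auto)

lemma party_step_mixture:
  fixes x :: "nat \<Rightarrow> 'a::real_inner"
  assumes eta: "\<forall>i<n. \<forall>j<n. 0 \<le> eta i j" and w: "norm w = 1" and "0 < lam" "in_cap n w lam x"
    and rows: "\<forall>i<n. (\<Sum>j<n. eta i j) \<le> S"
  shows "\<exists>V. (\<forall>i<n. party_step n eta x i = (\<Sum>j<n. V i j *\<^sub>R x j)) \<and>
    (\<forall>i<n. \<forall>j<n. eta i j / (1 + S) \<le> V i j)"
proof (intro exI conjI allI impI)
  define y where "y i = x i + (\<Sum>j<n. eta i j *\<^sub>R x j)" for i
  define V where "V i j = (1 / norm (y i)) * ((if i = j then 1 else 0) + eta i j)" for i j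
  fix i assume "i < n"
  have "(\<Sum>j<n. V i j *\<^sub>R x j) = (1 / norm (y i)) *\<^sub>R (\<Sum>j<n. ((if i = j then 1 else 0) + eta i j) *\<^sub>R x j)"
    unfolding V_def by (simp only: scaleR_scaleR[symmetric] scaleR_sum_right)
  also have "\<dots> = (1 / norm (y i)) *\<^sub>R y i"
    using sum_delta_scaleR[OF \<open>i < n\<close>, of x] unfolding y_def by (simp add: scaleR_add_left sum.distrib)
  finally show "party_step n eta x i = (\<Sum>j<n. V i j *\<^sub>R x j)"
    unfolding party_step_def proj_sphere_def y_def by simp
  fix j assume "j < n"
  have "0 < norm (y i)" "norm (y i) \<le> 1 + (\<Sum>j<n. eta i j)"
    using party_sum_bounds[OF _ w \<open>0 < lam\<close> \<open>in_cap n w lam x\<close> \<open>i < n\<close>] eta \<open>i < n\<close>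
    unfolding y_def by auto
  moreover have "(\<Sum>j<n. eta i j) \<le> S" using rows \<open>i < n\<close> by simp
  ultimately have "eta i j / (1 + S) \<le> eta i j / norm (y i)"
    using eta \<open>i < n\<close> \<open>j < n\<close> by (intro frac_le) auto
  also have "\<dots> \<le> V i j" unfolding V_def using \<open>0 < norm (y i)\<close> by (simp add: divide_right_mono)
  finally show "eta i j / (1 + S) \<le> V i j" .
qed

lemma funpow_party_step_mixture:
  fixes x :: "nat \<Rightarrow> 'a::real_inner"
  assumes eta: "\<forall>i<n. \<forall>j<n. 0 \<le> eta i j" and w: "norm w = 1" and "0 < lam"
    and rows: "\<forall>i<n. (\<Sum>j<n. eta i j) \<le> S"
    and B: "\<forall>i<n. \<forall>j<n. 0 \<le> B i j \<and> B i j \<le> eta i j / (1 + S)"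
    and "in_cap n w lam x"
  shows "\<exists>W. (\<forall>i<n. (party_step n eta ^^ k) x i = (\<Sum>j<n. W i j *\<^sub>R x j)) \<and>
    (\<forall>i<n. \<forall>j<n. mat_pow n B k i j \<le> W i j)"
  using \<open>in_cap n w lam x\<close>
proof (induction k arbitrary: x)
  case 0
  show ?case by (intro exI[of _ "\<lambda>i j. if i = j then 1 else 0"]) (auto simp: sum_delta_scaleR)
next
  case (Suc k)
  obtain V where V: "\<forall>i<n. party_step n eta x i = (\<Sum>j<n. V i j *\<^sub>R x j)"
    "\<forall>i<n. \<forall>j<n. eta i j / (1 + S) \<le> V i j"
    using party_step_mixture[OF eta w \<open>0 < lam\<close> Suc.prems rows] by blast
  obtain W where W: "\<forall>i<n. (party_step n eta ^^ k) (party_step n eta x) i = (\<Sum>l<n. W i l *\<^sub>R party_step n eta x l)"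
    "\<forall>i<n. \<forall>l<n. mat_pow n B k i l \<le> W i l"
    using Suc.IH party_step_in_cap[OF eta w \<open>0 < lam\<close> Suc.prems] by blast
  show ?case
  proof (intro exI conjI allI impI)
    fix i assume "i < n"
    show "(party_step n eta ^^ Suc k) x i = (\<Sum>j<n. mat_mul n W V i j *\<^sub>R x j)"
      using W(1) V(1) \<open>i < n\<close> by (simp add: funpow_Suc_right sum_scaleR_mat_mul[symmetric] del: funpow.simps)
    fix j assume "j < n"
    have B0: "\<forall>i<n. \<forall>j<n. 0 \<le> B i j" using B by simp
    have "mat_pow n B (Suc k) i j = mat_mul n (mat_pow n B k) B i j" by simp
    also have "\<dots> \<le> mat_mul n W V i j"
    proof (rule mat_mul_mono)
      show "\<forall>l<n. 0 \<le> mat_pow n B k i l \<and> mat_pow n B k i l \<le> W i l"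
        using W(2) mat_pow_nonneg[OF B0] \<open>i < n\<close> by simp
      show "\<forall>l<n. 0 \<le> B l j \<and> B l j \<le> V l j"
        using B V(2) \<open>j < n\<close> by (meson order_trans)
    qed
    finally show "mat_pow n B (Suc k) i j \<le> mat_mul n W V i j" .
  qed
qed

lemma party_iterate_uniformly_mixing:
  fixes eta :: "nat \<Rightarrow> nat \<Rightarrow> real"
  assumes eta: "\<forall>i<n. \<forall>j<n. 0 \<le> eta i j"
    and primitive: "\<forall>i<n. \<forall>j<n. 0 < mat_pow n (supp_mat eta) n i j"
  shows "\<exists>\<delta>>0. \<forall>(x :: nat \<Rightarrow> 'a::real_inner) w lam. norm w = 1 \<longrightarrow> 0 < lam \<longrightarrow> in_cap n w lam x \<longrightarrow>
    (\<exists>W. (\<forall>i<n. (party_step n eta ^^ n) x i = (\<Sum>j<n. W i j *\<^sub>R x j)) \<and> (\<forall>i<n. \<forall>j<n. \<delta> \<le> W i j))"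
proof -
  obtain e where e: "0 < e" "\<forall>i<n. \<forall>j<n. 0 < eta i j \<longrightarrow> e \<le> eta i j"
    using ex_pos_lower_bound[of "{..<n} \<times> {..<n}" "\<lambda>(i, j). eta i j"] by auto
  obtain a where a: "0 < a" "\<forall>i<n. \<forall>j<n. a \<le> mat_pow n (supp_mat eta) n i j"
    using ex_pos_lower_bound[of "{..<n} \<times> {..<n}" "\<lambda>(i, j). mat_pow n (supp_mat eta) n i j"] primitive
    by fastforce
  define S where "S = (\<Sum>i<n. \<Sum>j<n. eta i j)"
  have rows: "\<forall>i<n. (\<Sum>j<n. eta i j) \<le> S"
    unfolding S_def using eta by (auto intro!: member_le_sum[of _ _ "\<lambda>i. \<Sum>j<n. eta i j"] sum_nonneg)
  have "0 \<le> S" unfolding S_def using eta by (auto intro!: sum_nonneg)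
  define \<gamma> where "\<gamma> = e / (1 + S)"
  have B: "\<forall>i<n. \<forall>j<n. 0 \<le> \<gamma> * supp_mat eta i j \<and> \<gamma> * supp_mat eta i j \<le> eta i j / (1 + S)"
    using e eta \<open>0 \<le> S\<close> unfolding \<gamma>_def supp_mat_def by (auto intro: divide_right_mono)
  show ?thesis
  proof (intro exI[of _ "\<gamma> ^ n * a"] conjI allI impI)
    show "0 < \<gamma> ^ n * a" using e a \<open>0 \<le> S\<close> unfolding \<gamma>_def by simp
    fix x :: "nat \<Rightarrow> 'a" and w lam
    assume "norm w = 1" "0 < lam" "in_cap n w lam x"
    then obtain W where W: "\<forall>i<n. (party_step n eta ^^ n) x i = (\<Sum>j<n. W i j *\<^sub>R x j)"
      "\<forall>i<n. \<forall>j<n. mat_pow n (\<lambda>i j. \<gamma> * supp_mat eta i j) n i j \<le> W i j"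
      using funpow_party_step_mixture[OF eta _ _ rows B] by blast
    have "\<forall>i<n. \<forall>j<n. \<gamma> ^ n * a \<le> W i j"
    proof (intro allI impI)
      fix i j assume "i < n" "j < n"
      have "\<gamma> ^ n * a \<le> \<gamma> ^ n * mat_pow n (supp_mat eta) n i j"
        using a \<open>i < n\<close> \<open>j < n\<close> e \<open>0 \<le> S\<close> unfolding \<gamma>_def by (intro mult_left_mono) auto
      then show "\<gamma> ^ n * a \<le> W i j" using W(2) \<open>i < n\<close> \<open>j < n\<close> unfolding mat_pow_scale by force
    qed
    with W(1) show "\<exists>W. (\<forall>i<n. (party_step n eta ^^ n) x i = (\<Sum>j<n. W i j *\<^sub>R x j)) \<and>
      (\<forall>i<n. \<forall>j<n. \<gamma> ^ n * a \<le> W i j)" by blast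
  qed
qed

section \<open>Contraction of the angular radius\<close>

lemma in_cap_weight_fraction:
  fixes x :: "nat \<Rightarrow> 'a::real_inner"
  assumes "0 < n" "in_cap n w lam x" "norm w = 1" "0 < \<delta>" "\<forall>j<n. \<delta> \<le> W j"
    and "norm (\<Sum>j<n. W j *\<^sub>R x j) = 1"
  shows "\<forall>j<n. 0 \<le> W j \<and> \<delta> * lam * (\<Sum>j<n. W j) \<le> W j" "0 < (\<Sum>j<n. W j)"
proof -
  have W0: "\<forall>j<n. 0 \<le> W j" using assms(4,5) by force
  have "lam * (\<Sum>j<n. W j) = (\<Sum>j<n. W j * lam)" by (simp add: sum_distrib_left mult.commute)
  also have "\<dots> \<le> (\<Sum>j<n. W j * (w \<bullet> x j))"
    using assms(2) W0 unfolding in_cap_def by (intro sum_mono mult_left_mono) auto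
  also have "\<dots> = w \<bullet> (\<Sum>j<n. W j *\<^sub>R x j)" by (simp add: inner_sum_right)
  also have "\<dots> \<le> 1" using Cauchy_Schwarz_ineq2[of w "\<Sum>j<n. W j *\<^sub>R x j"] assms(3,6) by simp
  finally have "\<delta> * lam * (\<Sum>j<n. W j) \<le> \<delta>" using assms(4) by (simp add: mult.assoc mult_left_le)
  then show "\<forall>j<n. 0 \<le> W j \<and> \<delta> * lam * (\<Sum>j<n. W j) \<le> W j" using W0 assms(5) by force
  have "W 0 \<le> (\<Sum>j<n. W j)" using W0 \<open>0 < n\<close> by (intro member_le_sum) auto
  then show "0 < (\<Sum>j<n. W j)" using assms(4,5) \<open>0 < n\<close> by force
qed

lemma in_cap_Phi_bounds:
  fixes x :: "nat \<Rightarrow> 'a::euclidean_space"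
  assumes "0 < n" "0 < lam" "norm w = 1" "in_cap n w lam x"
  shows "0 \<le> Phi n x" "Phi n x < pi/2" "lam \<le> cos (Phi n x)"
proof -
  have x: "norm (x j) = 1" "lam \<le> w \<bullet> x j" if "j < n" for j
    using assms(4) that unfolding in_cap_def by auto
  have "lam \<le> 1" using x[OF \<open>0 < n\<close>] abs_inner_unit_le_1[OF assms(3) x(1)[OF \<open>0 < n\<close>]] by simp
  then have arccos_lam: "0 \<le> arccos lam" "arccos lam < pi/2" "cos (arccos lam) = lam"
    using \<open>0 < lam\<close> arccos_less_arccos[of 0 lam] by (auto intro: arccos_lbound)
  have "Phi n x \<le> max_angle n x w" using Phi_le_max_angle[OF \<open>0 < n\<close> assms(3)] .
  also have "\<dots> \<le> arccos lam"
    using x arccos_lam vec_angle_unit_le_iff[OF assms(3)] arccos_ubound[of lam] \<open>lam \<le> 1\<close> \<open>0 < lam\<close>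
    by (simp add: max_angle_le_iff[OF \<open>0 < n\<close>])
  finally have "Phi n x \<le> arccos lam" .
  then show "Phi n x < pi/2" using arccos_lam by simp
  obtain v where "norm v = 1" "Phi n x = max_angle n x v" using Phi_attained[OF \<open>0 < n\<close>, of x] .
  then show "0 \<le> Phi n x" using max_angle_bounds[OF \<open>0 < n\<close>, of x v] by simp
  then have "cos (arccos lam) \<le> cos (Phi n x)"
    using \<open>Phi n x \<le> arccos lam\<close> arccos_lam(2) by (intro cos_monotone_0_pi_le) auto
  then show "lam \<le> cos (Phi n x)" using arccos_lam(3) by simp
qed

lemma Phi_mixture_contracts:
  fixes x y :: "nat \<Rightarrow> 'a::euclidean_space" and W :: "nat \<Rightarrow> nat \<Rightarrow> real"
  assumes "0 < n" "0 < lam" and w: "norm w = 1" and x: "in_cap n w lam x"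
    and y: "\<forall>i<n. norm (y i) = 1 \<and> y i = (\<Sum>j<n. W i j *\<^sub>R x j)"
    and W: "0 < \<delta>" "\<forall>i<n. \<forall>j<n. \<delta> \<le> W i j"
    and c: "0 \<le> c" "c \<le> 1" "c \<le> \<delta> * lam ^ 3"
  shows "Phi n y \<le> (1 - c) * Phi n x"
proof -
  obtain v where v: "norm v = 1" "Phi n x = max_angle n x v" using Phi_attained[OF \<open>0 < n\<close>, of x] .
  define r where "r = Phi n x"
  note r = in_cap_Phi_bounds[OF \<open>0 < n\<close> \<open>0 < lam\<close> w x, folded r_def]
  have "r \<le> pi" using r(2) pi_gt_zero by linarith
  have x_near: "\<forall>j<n. norm (x j) = 1 \<and> cos r \<le> v \<bullet> x j"
  proof (intro allI impI conjI)
    fix j assume "j < n"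
    then show xj: "norm (x j) = 1" using x unfolding in_cap_def by simp
    have "vec_angle v (x j) \<le> r"
      using max_angle_le_iff[OF \<open>0 < n\<close>, of x v r] v(2) \<open>j < n\<close> unfolding r_def by simp
    then show "cos r \<le> v \<bullet> x j" using vec_angle_unit_le_iff[OF v(1) xj r(1) \<open>r \<le> pi\<close>] by simp
  qed
  have separated: "\<forall>u. norm u = 1 \<longrightarrow> u \<bullet> v = 0 \<longrightarrow> (\<exists>j<n. u \<bullet> x j \<le> 0)"
    using minimizer_separates[OF \<open>0 < n\<close> v(1)] x Phi_le_max_angle[OF \<open>0 < n\<close>] v(2)
    unfolding in_cap_def by metis
  have c': "c \<le> (\<delta> * lam) * lam\<^sup>2" using c(3) by (simp add: power3_eq_cube power2_eq_square mult.assoc)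
  have "vec_angle v (y i) \<le> (1 - c) * r" if "i < n" for i
    using in_cap_weight_fraction[OF \<open>0 < n\<close> x w W(1), of "W i"] W(2) y that
      vec_angle_mixture_le[OF \<open>0 < n\<close> v(1) x_near r(1,2) separated _ _ \<open>0 < lam\<close> r(3) c(1,2) c']
    by auto
  then have "max_angle n y v \<le> (1 - c) * r" by (simp add: max_angle_le_iff[OF \<open>0 < n\<close>])
  then show ?thesis using Phi_le_max_angle[OF \<open>0 < n\<close> v(1), of y] unfolding r_def by linarith
qed

theorem lemma3p13:
  fixes n :: nat and eta :: "nat \<Rightarrow> nat \<Rightarrow> real" and lam :: real
  assumes "n \<ge> 1"
    and "\<And>i j. i < n \<Longrightarrow> j < n \<Longrightarrow> eta i j \<ge> 0"
    and "\<And>i j. i < n \<Longrightarrow> j < n \<Longrightarrow> mat_pow n (supp_mat eta) n i j > 0"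
    and "lam > 0"
  shows "\<exists>c>0. \<forall>(x :: nat \<Rightarrow> 'a::euclidean_space) w.
           (\<forall>i<n. norm (x i) = 1) \<longrightarrow> norm w = 1 \<longrightarrow> (\<forall>i<n. w \<bullet> x i \<ge> lam) \<longrightarrow>
           Phi n ((party_step n eta ^^ n) x) \<le> (1 - c) * Phi n x"
proof -
  have "0 < n" using assms(1) by simp
  have eta: "\<forall>i<n. \<forall>j<n. 0 \<le> eta i j" using assms(2) by simp
  obtain \<delta> where "0 < \<delta>" and mixing: "\<forall>(x :: nat \<Rightarrow> 'a) w lam. norm w = 1 \<longrightarrow> 0 < lam \<longrightarrow> in_cap n w lam x \<longrightarrow>
    (\<exists>W. (\<forall>i<n. (party_step n eta ^^ n) x i = (\<Sum>j<n. W i j *\<^sub>R x j)) \<and> (\<forall>i<n. \<forall>j<n. \<delta> \<le> W i j))"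
    using party_iterate_uniformly_mixing[OF eta] assms(3) by blast
  define c where "c = min 1 (\<delta> * lam ^ 3)"
  have c: "0 < c" "c \<le> 1" "c \<le> \<delta> * lam ^ 3" using \<open>0 < \<delta>\<close> \<open>lam > 0\<close> unfolding c_def by auto
  show ?thesis
  proof (intro exI[of _ c] conjI allI impI \<open>0 < c\<close>)
    fix x :: "nat \<Rightarrow> 'a" and w
    assume "\<forall>i<n. norm (x i) = 1" "norm w = 1" "\<forall>i<n. lam \<le> w \<bullet> x i"
    then have x: "in_cap n w lam x" unfolding in_cap_def by simp
    then obtain W where W: "\<forall>i<n. (party_step n eta ^^ n) x i = (\<Sum>j<n. W i j *\<^sub>R x j)" "\<forall>i<n. \<forall>j<n. \<delta> \<le> W i j"
      using mixing \<open>norm w = 1\<close> \<open>lam > 0\<close> by blast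
    have "in_cap n w lam ((party_step n eta ^^ n) x)"
      using funpow_party_step_in_cap[OF eta \<open>norm w = 1\<close> \<open>lam > 0\<close> x] .
    then show "Phi n ((party_step n eta ^^ n) x) \<le> (1 - c) * Phi n x"
      using Phi_mixture_contracts[OF \<open>0 < n\<close> \<open>lam > 0\<close> \<open>norm w = 1\<close> x _ \<open>0 < \<delta>\<close> W(2)] W(1) c
      unfolding in_cap_def by auto
  qed
qed

end
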